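(* Let $\mathcal M=(M,<,+,0,\ldots)$ be a definably complete locally o-minimal expansion of an ordered group. Let $f:(X,\tau_X)\to(Y,\tau_Y)$ be a definably closed definable continuous map between definable topological spaces such that $f^{-1}(y)$ is definably compact for every $y\in Y$. Then $f$ is definably proper.
   Context: "Definable" means definable in $\mathcal M$ with parameters. $\mathcal M$ is an expansion of an ordered group with dense order without endpoints; locally o-minimal: for every definable $Z\subseteq M$ and $a\in M$ there is an open interval $I\ni a$ with $Z\cap I$ a finite union of points and open intervals; definably complete: every definable subset of $M$ has sup and inf in $M\cup\{\pm\infty\}$. A definable topological space is a definable set with a topology having a definable family as open base. A definable subset is definably compact if, with the relative topology, every definable filtered family (any two members contain a common member) of nonempty closed subsets has nonempty intersection. $f$ is definably closed if $f(C)$ is closed for every definable closed $C\subseteq X$, and definably proper if $f^{-1}(C)$ is definably compact for every definably compact definable $C\subseteq Y$. *)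

theory Defs
  imports "HOL-Analysis.Analysis"
begin

text \<open>Points of M^n are lists of length n.  The definable sets (with parameters) of an
expansion of M are represented, following van den Dries, as a sequence S of
families of subsets of M^n closed under the usual operations.\<close>

definition tuples :: "nat \<Rightarrow> 'a list set" where
  "tuples n = {xs. length xs = n}"

definition is_structure :: "(nat \<Rightarrow> 'a list set set) \<Rightarrow> bool" where
  "is_structure S \<longleftrightarrow> (\<forall>n.
     S n \<subseteq> Pow (tuples n) \<and> {} \<in> S n \<and>
     (\<forall>A\<in>S n. tuples n - A \<in> S n) \<and>
     (\<forall>A\<in>S n. \<forall>B\<in>S n. A \<union> B \<in> S n) \<and>
     (\<forall>A\<in>S n. {x # xs | x xs. xs \<in> A} \<in> S (Suc n) \<and> {xs @ [x] | x xs. xs \<in> A} \<in> S (Suc n)) \<and>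
     (\<forall>i<n. \<forall>j<n. {xs \<in> tuples n. xs ! i = xs ! j} \<in> S n) \<and>
     (\<forall>A\<in>S (Suc n). butlast ` A \<in> S n))"

text \<open>S contains all parameters (singletons), the order and the graph of addition.\<close>
definition expands_ordered_group :: "(nat \<Rightarrow> ('a::{linorder,plus}) list set set) \<Rightarrow> bool" where
  "expands_ordered_group S \<longleftrightarrow>
     (\<forall>a. {[a]} \<in> S 1) \<and> {[x, y] | x y. x < y} \<in> S 2 \<and> {[x, y, x + y] | x y. True} \<in> S 3"

definition locally_o_minimal :: "(nat \<Rightarrow> ('a::linorder) list set set) \<Rightarrow> bool" where
  "locally_o_minimal S \<longleftrightarrow> (\<forall>Z\<in>S 1. \<forall>a. \<exists>l r. l < a \<and> a < r \<and>
     (\<exists>P Iv. finite P \<and> finite Iv \<and>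
        {x. [x] \<in> Z} \<inter> {l<..<r} = P \<union> (\<Union>(p, q)\<in>Iv. {p<..<q})))"

definition definably_complete :: "(nat \<Rightarrow> ('a::linorder) list set set) \<Rightarrow> bool" where
  "definably_complete S \<longleftrightarrow> (\<forall>Z\<in>S 1.
     ({x. [x] \<in> Z} \<noteq> {} \<and> (\<exists>b. \<forall>z\<in>{x. [x] \<in> Z}. z \<le> b) \<longrightarrow>
        (\<exists>s. (\<forall>z\<in>{x. [x] \<in> Z}. z \<le> s) \<and> (\<forall>t. (\<forall>z\<in>{x. [x] \<in> Z}. z \<le> t) \<longrightarrow> s \<le> t))) \<and>
     ({x. [x] \<in> Z} \<noteq> {} \<and> (\<exists>b. \<forall>z\<in>{x. [x] \<in> Z}. b \<le> z) \<longrightarrow>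
        (\<exists>s. (\<forall>z\<in>{x. [x] \<in> Z}. s \<le> z) \<and> (\<forall>t. (\<forall>z\<in>{x. [x] \<in> Z}. t \<le> z) \<longrightarrow> t \<le> s))))"

definition fiber :: "'a list set \<Rightarrow> 'a list \<Rightarrow> 'a list set" where
  "fiber F u = {x. u @ x \<in> F}"

text \<open>A definable family of subsets of M^n: members fiber F u for u in a definable U in M^k.\<close>
definition definable_family :: "(nat \<Rightarrow> 'a list set set) \<Rightarrow> nat \<Rightarrow> nat \<Rightarrow> 'a list set \<Rightarrow> 'a list set \<Rightarrow> bool" where
  "definable_family S k n U F \<longleftrightarrow> U \<in> S k \<and> F \<in> S (k + n)"

definition definable_top_space :: "(nat \<Rightarrow> 'a list set set) \<Rightarrow> nat \<Rightarrow> 'a list topology \<Rightarrow> bool" where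
  "definable_top_space S n T \<longleftrightarrow> topspace T \<in> S n \<and>
     (\<exists>k U F. definable_family S k n U F \<and>
        (\<forall>u\<in>U. openin T (fiber F u)) \<and>
        (\<forall>V. openin T V \<longrightarrow> (\<forall>x\<in>V. \<exists>u\<in>U. x \<in> fiber F u \<and> fiber F u \<subseteq> V)))"

definition definably_compact :: "(nat \<Rightarrow> 'a list set set) \<Rightarrow> nat \<Rightarrow> 'a list topology \<Rightarrow> 'a list set \<Rightarrow> bool" where
  "definably_compact S n T C \<longleftrightarrow> C \<in> S n \<and> C \<subseteq> topspace T \<and>
     (\<forall>k U F. definable_family S k n U F \<and> U \<noteq> {} \<and>
        (\<forall>u\<in>U. fiber F u \<noteq> {} \<and> closedin (subtopology T C) (fiber F u)) \<and>
        (\<forall>u\<in>U. \<forall>v\<in>U. \<exists>w\<in>U. fiber F w \<subseteq> fiber F u \<inter> fiber F v)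
        \<longrightarrow> (\<Inter>u\<in>U. fiber F u) \<noteq> {})"

definition definable_map :: "(nat \<Rightarrow> 'a list set set) \<Rightarrow> nat \<Rightarrow> nat \<Rightarrow> 'a list set \<Rightarrow> ('a list \<Rightarrow> 'a list) \<Rightarrow> bool" where
  "definable_map S n m X f \<longleftrightarrow> {x @ f x | x. x \<in> X} \<in> S (n + m)"

end

theory Submission
  imports Defs
begin

text \<open>Let \<open>C\<close> be definably compact in \<open>Y\<close> and \<open>D = f\<^sup>-\<^sup>1(C)\<close>, and let \<open>(F\<^sub>u)\<close> be a definable
  downward directed family of nonempty closed subsets of \<open>D\<close>.  Each \<open>F\<^sub>u\<close> is the trace on \<open>D\<close>
  of its closure, a definable closed set, so \<open>f(F\<^sub>u)\<close> is closed in \<open>C\<close> because \<open>f\<close> is definably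
  closed.  The images form a definable directed family in \<open>C\<close>, hence have a common point \<open>y\<close>.
  The traces of the \<open>F\<^sub>u\<close> on the definably compact fibre \<open>f\<^sup>-\<^sup>1(y)\<close> are then nonempty, closed
  and directed, so they have a common point as well.\<close>

section \<open>Topological preliminaries\<close>

lemma closure_of_eq_basis:
  assumes "\<And>u. u \<in> U \<Longrightarrow> openin T (B u)"
    and "\<And>V x. openin T V \<Longrightarrow> x \<in> V \<Longrightarrow> \<exists>u\<in>U. x \<in> B u \<and> B u \<subseteq> V"
  shows "T closure_of A = {x \<in> topspace T. \<forall>u\<in>U. x \<in> B u \<longrightarrow> B u \<inter> A \<noteq> {}}"
proof (intro equalityI subsetI)
  fix x assume "x \<in> T closure_of A"
  then show "x \<in> {x \<in> topspace T. \<forall>u\<in>U. x \<in> B u \<longrightarrow> B u \<inter> A \<noteq> {}}"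
    using assms(1) unfolding closure_of_def by blast
next
  fix x assume x: "x \<in> {x \<in> topspace T. \<forall>u\<in>U. x \<in> B u \<longrightarrow> B u \<inter> A \<noteq> {}}"
  show "x \<in> T closure_of A"
    unfolding closure_of_def
  proof (intro CollectI conjI allI impI)
    show "x \<in> topspace T" using x by simp
    fix V assume "x \<in> V \<and> openin T V"
    then obtain u where "u \<in> U" "x \<in> B u" "B u \<subseteq> V" using assms(2) by blast
    then show "\<exists>y\<in>A. y \<in> V" using x by blast
  qed
qed

lemma closedin_subtopology_image_preimage:
  assumes "closedin (subtopology X {x \<in> topspace X. f x \<in> C}) A"
    and "closedin Y (f ` (X closure_of A))"
  shows "closedin (subtopology Y C) (f ` A)"
proof -
  let ?D = "{x \<in> topspace X. f x \<in> C}"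
  obtain K where "closedin X K" "A = K \<inter> ?D"
    using assms(1) closedin_subtopology by metis
  then have A_eq: "A = X closure_of A \<inter> ?D"
    using closure_of_minimal[of A K X] closure_of_subset[of A X] by blast
  have "f ` A = f ` (X closure_of A) \<inter> C"
  proof
    show "f ` A \<subseteq> f ` (X closure_of A) \<inter> C"
      using A_eq by blast
    show "f ` (X closure_of A) \<inter> C \<subseteq> f ` A"
    proof
      fix y assume "y \<in> f ` (X closure_of A) \<inter> C"
      then obtain x where "x \<in> X closure_of A" "f x \<in> C" "y = f x" by blast
      moreover from this have "x \<in> topspace X" using closure_of_subset_topspace by fast
      ultimately show "y \<in> f ` A" by (subst A_eq) blast
    qed
  qed
  then show ?thesis
    unfolding closedin_subtopology using assms(2) by blast
qed

section \<open>Definable sets\<close>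

definition definable_pred :: "(nat \<Rightarrow> 'a list set set) \<Rightarrow> nat \<Rightarrow> ('a list \<Rightarrow> bool) \<Rightarrow> bool" where
  "definable_pred S N P \<longleftrightarrow> {xs \<in> tuples N. P xs} \<in> S N"

definition list_graph :: "'a list set \<Rightarrow> ('a list \<Rightarrow> 'a list) \<Rightarrow> 'a list set" where
  "list_graph X f = {x @ f x | x. x \<in> X}"

lemma definable_map_iff_graph: "definable_map S n m X f \<longleftrightarrow> list_graph X f \<in> S (n + m)"
  by (simp add: definable_map_def list_graph_def)

locale definable_structure =
  fixes S :: "nat \<Rightarrow> 'a list set set"
  assumes S_structure: "is_structure S"
begin

lemma
  shows definable_subset_tuples: "A \<in> S N \<Longrightarrow> A \<subseteq> tuples N"
    and definable_empty: "{} \<in> S N"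
    and definable_compl: "A \<in> S N \<Longrightarrow> tuples N - A \<in> S N"
    and definable_Un: "A \<in> S N \<Longrightarrow> B \<in> S N \<Longrightarrow> A \<union> B \<in> S N"
    and definable_Cons: "A \<in> S N \<Longrightarrow> {x # xs | x xs. xs \<in> A} \<in> S (Suc N)"
    and definable_nth_eq: "i < N \<Longrightarrow> j < N \<Longrightarrow> {xs \<in> tuples N. xs ! i = xs ! j} \<in> S N"
    and definable_butlast: "A \<in> S (Suc N) \<Longrightarrow> butlast ` A \<in> S N"
  using S_structure[unfolded is_structure_def, THEN spec[of _ N]] by blast+

lemma definable_length: "A \<in> S N \<Longrightarrow> xs \<in> A \<Longrightarrow> length xs = N"
  using definable_subset_tuples by (auto simp: tuples_def)

lemma definable_setI:
  assumes "definable_pred S N P" "A \<subseteq> tuples N" "\<And>xs. length xs = N \<Longrightarrow> xs \<in> A \<longleftrightarrow> P xs"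
  shows "A \<in> S N"
proof -
  have "A = {xs \<in> tuples N. P xs}" using assms(2,3) by (auto simp: tuples_def)
  then show ?thesis using assms(1) by (simp add: definable_pred_def)
qed

lemma definable_pred_cong:
  assumes "definable_pred S N P" "\<And>xs. length xs = N \<Longrightarrow> P xs \<longleftrightarrow> Q xs"
  shows "definable_pred S N Q"
proof -
  have "{xs \<in> tuples N. P xs} = {xs \<in> tuples N. Q xs}" using assms(2) by (auto simp: tuples_def)
  then show ?thesis using assms(1) by (simp add: definable_pred_def)
qed

lemma definable_pred_mem: "A \<in> S N \<Longrightarrow> definable_pred S N (\<lambda>xs. xs \<in> A)"
  using definable_subset_tuples unfolding definable_pred_def by (metis Collect_mem_eq Int_absorb1 Int_def)

lemma definable_pred_True: "definable_pred S N (\<lambda>_. True)"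
  using definable_compl[OF definable_empty] by (simp add: definable_pred_def)

lemma definable_pred_not:
  assumes "definable_pred S N P"
  shows "definable_pred S N (\<lambda>xs. \<not> P xs)"
proof -
  have "tuples N - {xs \<in> tuples N. P xs} \<in> S N"
    using assms unfolding definable_pred_def by (rule definable_compl)
  moreover have "tuples N - {xs \<in> tuples N. P xs} = {xs \<in> tuples N. \<not> P xs}" by blast
  ultimately show ?thesis by (simp add: definable_pred_def)
qed

lemma definable_pred_disj:
  "definable_pred S N P \<Longrightarrow> definable_pred S N Q \<Longrightarrow> definable_pred S N (\<lambda>xs. P xs \<or> Q xs)"
  unfolding definable_pred_def by (drule (1) definable_Un) (simp add: Collect_disj_eq[symmetric] conj_disj_distribL)

lemma definable_pred_conj:
  "definable_pred S N P \<Longrightarrow> definable_pred S N Q \<Longrightarrow> definable_pred S N (\<lambda>xs. P xs \<and> Q xs)"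
  using definable_pred_not[OF definable_pred_disj[OF definable_pred_not definable_pred_not]] by simp

lemma definable_pred_ex_snoc:
  assumes "definable_pred S (Suc N) P"
  shows "definable_pred S N (\<lambda>xs. \<exists>x. P (xs @ [x]))"
proof -
  have "butlast ` {ys \<in> tuples (Suc N). P ys} = {xs \<in> tuples N. \<exists>x. P (xs @ [x])}"
  proof (intro equalityI subsetI)
    fix xs assume "xs \<in> butlast ` {ys \<in> tuples (Suc N). P ys}"
    then obtain ys where "ys \<in> tuples (Suc N)" "P ys" "xs = butlast ys" by blast
    moreover from this have "ys = butlast ys @ [last ys]" by (cases ys rule: rev_cases) (auto simp: tuples_def)
    ultimately show "xs \<in> {xs \<in> tuples N. \<exists>x. P (xs @ [x])}" by (auto simp: tuples_def) metis
  qed (force simp: tuples_def)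
  then show ?thesis using definable_butlast assms unfolding definable_pred_def by metis
qed

lemma definable_pred_ex_suffix:
  "definable_pred S (N + K) P \<Longrightarrow> definable_pred S N (\<lambda>xs. \<exists>ys. length ys = K \<and> P (xs @ ys))"
proof (induction K arbitrary: P)
  case 0
  then show ?case by simp
next
  case (Suc K)
  have "definable_pred S (N + K) (\<lambda>zs. \<exists>x. P (zs @ [x]))"
    using definable_pred_ex_snoc Suc.prems by simp
  then have "definable_pred S N (\<lambda>xs. \<exists>ys. length ys = K \<and> (\<exists>x. P ((xs @ ys) @ [x])))"
    using Suc.IH by blast
  moreover have "(\<exists>ys. length ys = K \<and> (\<exists>x. P ((xs @ ys) @ [x])))
      \<longleftrightarrow> (\<exists>ys. length ys = Suc K \<and> P (xs @ ys))" for xs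
    by (metis append_assoc length_Suc_conv_rev)
  ultimately show ?case by (rule definable_pred_cong)
qed

lemma definable_pred_nth_eq: "i < N \<Longrightarrow> j < N \<Longrightarrow> definable_pred S N (\<lambda>xs. xs ! i = xs ! j)"
  unfolding definable_pred_def by (rule definable_nth_eq)

lemma definable_pred_drop_mem: "A \<in> S N \<Longrightarrow> definable_pred S (K + N) (\<lambda>zs. drop K zs \<in> A)"
proof (induction K)
  case 0
  then show ?case using definable_pred_mem by simp
next
  case (Suc K)
  have "{x # xs | x xs. xs \<in> {zs \<in> tuples (K + N). drop K zs \<in> A}} \<in> S (Suc (K + N))"
    using Suc unfolding definable_pred_def by (intro definable_Cons)
  moreover have "{x # xs | x xs. xs \<in> {zs \<in> tuples (K + N). drop K zs \<in> A}}
      = {zs \<in> tuples (Suc K + N). drop (Suc K) zs \<in> A}"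
    by (auto simp: tuples_def length_Suc_conv)
  ultimately show ?case by (simp add: definable_pred_def)
qed

lemma definable_pred_all_less:
  "(\<And>i. i < (q::nat) \<Longrightarrow> definable_pred S N (P i)) \<Longrightarrow> definable_pred S N (\<lambda>xs. \<forall>i<q. P i xs)"
proof (induction q)
  case 0
  then show ?case using definable_pred_True by simp
next
  case (Suc q)
  then have "definable_pred S N (\<lambda>xs. (\<forall>i<q. P i xs) \<and> P q xs)" by (intro definable_pred_conj) auto
  then show ?case by (rule definable_pred_cong) (auto simp: less_Suc_eq)
qed

text \<open>The new coordinates are adjoined, equated with the picked ones and projected away.\<close>
lemma definable_pred_map_nth_mem:
  assumes A: "A \<in> S q" and \<sigma>: "\<And>i. i < q \<Longrightarrow> \<sigma> i < N"
  shows "definable_pred S N (\<lambda>xs. map (\<lambda>i. xs ! \<sigma> i) [0..<q] \<in> A)"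
proof -
  have "definable_pred S (N + q) (\<lambda>zs. drop N zs \<in> A \<and> (\<forall>i<q. zs ! \<sigma> i = zs ! (N + i)))"
    using definable_pred_drop_mem[OF A, of N] \<sigma>
    by (intro definable_pred_conj definable_pred_all_less definable_pred_nth_eq) (auto intro: trans_less_add1)
  then have "definable_pred S N (\<lambda>xs. \<exists>ys. length ys = q \<and>
      drop N (xs @ ys) \<in> A \<and> (\<forall>i<q. (xs @ ys) ! \<sigma> i = (xs @ ys) ! (N + i)))"
    by (rule definable_pred_ex_suffix)
  then show ?thesis
  proof (rule definable_pred_cong)
    fix xs :: "'a list" assume "length xs = N"
    then have "(\<forall>i<q. (xs @ ys) ! \<sigma> i = (xs @ ys) ! (N + i)) \<longleftrightarrow> (\<forall>i<q. ys ! i = xs ! \<sigma> i)" for ys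
      using \<sigma> by (auto simp: nth_append)
    moreover have "(length ys = q \<and> (\<forall>i<q. ys ! i = xs ! \<sigma> i)) \<longleftrightarrow> ys = map (\<lambda>i. xs ! \<sigma> i) [0..<q]" for ys
      by (auto intro!: nth_equalityI)
    ultimately have "(length ys = q \<and> drop N (xs @ ys) \<in> A \<and> (\<forall>i<q. (xs @ ys) ! \<sigma> i = (xs @ ys) ! (N + i)))
        \<longleftrightarrow> ys = map (\<lambda>i. xs ! \<sigma> i) [0..<q] \<and> ys \<in> A" for ys
      using \<open>length xs = N\<close> by auto
    then show "(\<exists>ys. length ys = q \<and> drop N (xs @ ys) \<in> A \<and> (\<forall>i<q. (xs @ ys) ! \<sigma> i = (xs @ ys) ! (N + i)))
        \<longleftrightarrow> map (\<lambda>i. xs ! \<sigma> i) [0..<q] \<in> A"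
      by simp
  qed
qed

lemma definable_pred_slices_mem:
  assumes "A \<in> S (q1 + q2)" "p1 + q1 \<le> N" "p2 + q2 \<le> N"
  shows "definable_pred S N (\<lambda>xs. take q1 (drop p1 xs) @ take q2 (drop p2 xs) \<in> A)"
proof -
  have map_nth: "definable_pred S N (\<lambda>xs. map (\<lambda>i. xs ! (if i < q1 then p1 + i else p2 + (i - q1))) [0..<q1+q2] \<in> A)"
    using assms by (intro definable_pred_map_nth_mem) auto
  have slices: "map (\<lambda>i. xs ! (if i < q1 then p1 + i else p2 + (i - q1))) [0..<q1+q2]
      = take q1 (drop p1 xs) @ take q2 (drop p2 xs)" if "length xs = N" for xs :: "'a list"
    using that assms(2,3) by (intro nth_equalityI) (auto simp: nth_append)
  show ?thesis by (rule definable_pred_cong[OF map_nth]) (simp add: slices)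
qed

lemma definable_pred_slice_mem:
  assumes "A \<in> S q" "p + q \<le> N"
  shows "definable_pred S N (\<lambda>xs. take q (drop p xs) \<in> A)"
  using definable_pred_slices_mem[of A 0 q 0 N p] assms by simp

lemma definable_pred_slice_eq:
  assumes singletons: "\<And>a. {[a]} \<in> S 1" and "length u = q" "p + q \<le> N"
  shows "definable_pred S N (\<lambda>xs. take q (drop p xs) = u)"
proof -
  have "definable_pred S N (\<lambda>xs. \<forall>i<q. take 1 (drop (p + i) xs) \<in> {[u ! i]})"
    using assms by (intro definable_pred_all_less definable_pred_slice_mem) auto
  then show ?thesis
    by (rule definable_pred_cong) (use assms(2,3) in \<open>auto simp: list_eq_iff_nth_eq take_Suc_conv_app_nth\<close>)
qed

lemma fiber_definable:
  assumes singletons: "\<And>a. {[a]} \<in> S 1" and "F \<in> S (k + n)" "length u = k"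
  shows "fiber F u \<in> S n"
proof (rule definable_setI)
  have "definable_pred S (n + k) (\<lambda>zs. take k (drop n zs) = u \<and> take k (drop n zs) @ take n (drop 0 zs) \<in> F)"
    using assms by (intro definable_pred_conj definable_pred_slice_eq definable_pred_slices_mem) auto
  then show "definable_pred S n (\<lambda>xs. \<exists>ys. length ys = k \<and>
      take k (drop n (xs @ ys)) = u \<and> take k (drop n (xs @ ys)) @ take n (drop 0 (xs @ ys)) \<in> F)"
    by (rule definable_pred_ex_suffix)
  show "fiber F u \<subseteq> tuples n"
    using assms(3) by (auto simp: fiber_def tuples_def dest: definable_length[OF assms(2)])
  show "xs \<in> fiber F u \<longleftrightarrow> (\<exists>ys. length ys = k \<and>
      take k (drop n (xs @ ys)) = u \<and> take k (drop n (xs @ ys)) @ take n (drop 0 (xs @ ys)) \<in> F)"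
    if "length xs = n" for xs
    using that assms(3) by (auto simp: fiber_def)
qed

lemma definable_map_length:
  assumes "X \<in> S n" "definable_map S n m X f" "x \<in> X"
  shows "length (f x) = m"
proof -
  have "x @ f x \<in> list_graph X f" using assms(3) by (auto simp: list_graph_def)
  then have "length (x @ f x) = n + m"
    using assms(2) unfolding definable_map_iff_graph by (rule definable_length[rotated])
  then show ?thesis using definable_length[OF assms(1,3)] by simp
qed

lemma append_mem_list_graph_iff:
  assumes "X \<in> S n" "length x = n"
  shows "x @ y \<in> list_graph X f \<longleftrightarrow> x \<in> X \<and> y = f x"
proof
  assume "x @ y \<in> list_graph X f"
  then obtain x' where "x' \<in> X" "x @ y = x' @ f x'" unfolding list_graph_def by blast
  moreover from this have "length x = length x'" using assms definable_length by metis
  ultimately show "x \<in> X \<and> y = f x" by simp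
qed (auto simp: list_graph_def)

lemma preimage_definable:
  assumes "X \<in> S n" "definable_map S n m X f" "C \<in> S m"
  shows "{x \<in> X. f x \<in> C} \<in> S n"
proof (rule definable_setI)
  have "definable_pred S (n + m) (\<lambda>zs. zs \<in> list_graph X f \<and> drop n zs \<in> C)"
    using assms by (intro definable_pred_conj definable_pred_mem definable_pred_drop_mem)
      (simp_all add: definable_map_iff_graph)
  then show "definable_pred S n (\<lambda>xs. \<exists>ys. length ys = m \<and> xs @ ys \<in> list_graph X f \<and> drop n (xs @ ys) \<in> C)"
    by (rule definable_pred_ex_suffix)
  show "{x \<in> X. f x \<in> C} \<subseteq> tuples n"
    using definable_subset_tuples[OF assms(1)] by blast
  show "xs \<in> {x \<in> X. f x \<in> C} \<longleftrightarrow> (\<exists>ys. length ys = m \<and> xs @ ys \<in> list_graph X f \<and> drop n (xs @ ys) \<in> C)"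
    if "length xs = n" for xs
    using that append_mem_list_graph_iff[OF assms(1) that] definable_map_length[OF assms(1,2)] by auto
qed

lemma image_family_definable:
  assumes "X \<in> S n" "definable_map S n m X f" "F \<in> S (k + n)"
  obtains G where "G \<in> S (k + m)" "\<And>u. length u = k \<Longrightarrow> fiber G u = f ` (fiber F u \<inter> X)"
proof
  let ?G = "{zs \<in> tuples (k + m). \<exists>x. length x = n \<and> take k zs @ x \<in> F \<and> x @ drop k zs \<in> list_graph X f}"
  have "definable_pred S (k + m + n)
      (\<lambda>ws. take k (drop 0 ws) @ take n (drop (k + m) ws) \<in> F \<and> take n (drop (k + m) ws) @ take m (drop k ws) \<in> list_graph X f)"
    using assms by (intro definable_pred_conj definable_pred_slices_mem) (auto simp: definable_map_iff_graph)
  then have "definable_pred S (k + m) (\<lambda>zs. \<exists>x. length x = n \<and> take k zs @ x \<in> F \<and> x @ drop k zs \<in> list_graph X f)"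
    by (rule definable_pred_cong[OF definable_pred_ex_suffix]) (simp cong: conj_cong)
  then show "?G \<in> S (k + m)"
    unfolding definable_pred_def .
  show "fiber ?G u = f ` (fiber F u \<inter> X)" if "length u = k" for u
  proof (rule set_eqI)
    fix y
    have "y \<in> fiber ?G u \<longleftrightarrow> length y = m \<and> (\<exists>x. length x = n \<and> u @ x \<in> F \<and> x \<in> X \<and> y = f x)"
      using that by (simp add: fiber_def tuples_def append_mem_list_graph_iff[OF assms(1)] cong: conj_cong)
    also have "\<dots> \<longleftrightarrow> y \<in> f ` (fiber F u \<inter> X)"
      using definable_length[OF assms(1)] definable_map_length[OF assms(1,2)] by (auto simp: fiber_def)
    finally show "y \<in> fiber ?G u \<longleftrightarrow> y \<in> f ` (fiber F u \<inter> X)" .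
  qed
qed

lemma Int_family_definable:
  assumes "F \<in> S (k + n)" "P \<in> S n"
  obtains G where "G \<in> S (k + n)" "\<And>u. length u = k \<Longrightarrow> fiber G u = fiber F u \<inter> P"
proof
  have "definable_pred S (k + n) (\<lambda>zs. zs \<in> F \<and> drop k zs \<in> P)"
    using assms by (intro definable_pred_conj definable_pred_mem definable_pred_drop_mem)
  then show "{zs \<in> tuples (k + n). zs \<in> F \<and> drop k zs \<in> P} \<in> S (k + n)"
    unfolding definable_pred_def .
  show "fiber {zs \<in> tuples (k + n). zs \<in> F \<and> drop k zs \<in> P} u = fiber F u \<inter> P" if "length u = k" for u
    using that by (auto simp: fiber_def tuples_def dest: definable_length[OF assms(1)])
qed

lemma closure_of_definable:
  assumes "definable_top_space S n T" "A \<in> S n"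
  shows "T closure_of A \<in> S n"
proof -
  obtain k U B where U: "U \<in> S k" and B: "B \<in> S (k + n)" and X: "topspace T \<in> S n"
    and "\<forall>u\<in>U. openin T (fiber B u)"
    and "\<forall>V. openin T V \<longrightarrow> (\<forall>x\<in>V. \<exists>u\<in>U. x \<in> fiber B u \<and> fiber B u \<subseteq> V)"
    using assms(1) unfolding definable_top_space_def definable_family_def by blast
  then have closure_eq: "T closure_of A = {x \<in> topspace T. \<forall>u\<in>U. x \<in> fiber B u \<longrightarrow> fiber B u \<inter> A \<noteq> {}}"
    by (intro closure_of_eq_basis) auto
  have "definable_pred S (n + k + n)
      (\<lambda>ws. take k (drop n ws) @ take n (drop (n + k) ws) \<in> B \<and> take n (drop (n + k) ws) \<in> A)"
    using assms B by (intro definable_pred_conj definable_pred_slices_mem definable_pred_slice_mem) auto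
  then have meets: "definable_pred S (n + k) (\<lambda>zs. \<exists>a\<in>A. drop n zs @ a \<in> B)"
    by (rule definable_pred_cong[OF definable_pred_ex_suffix])
      (auto simp: min_def cong: conj_cong dest: definable_length[OF assms(2)])
  have "definable_pred S (n + k)
      (\<lambda>zs. take k (drop n zs) \<in> U \<and> take k (drop n zs) @ take n (drop 0 zs) \<in> B \<and> \<not> (\<exists>a\<in>A. drop n zs @ a \<in> B))"
    using U B meets by (intro definable_pred_conj definable_pred_not definable_pred_slice_mem definable_pred_slices_mem) auto
  then have "definable_pred S n (\<lambda>x. \<exists>w\<in>U. x \<in> fiber B w \<and> fiber B w \<inter> A = {})"
    by (rule definable_pred_cong[OF definable_pred_ex_suffix])
      (auto simp: fiber_def cong: conj_cong dest: definable_length[OF U])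
  then have "definable_pred S n (\<lambda>x. x \<in> topspace T \<and> \<not> (\<exists>w\<in>U. x \<in> fiber B w \<and> fiber B w \<inter> A = {}))"
    using X by (intro definable_pred_conj definable_pred_not definable_pred_mem)
  then show ?thesis
  proof (rule definable_setI)
    show "T closure_of A \<subseteq> tuples n"
      using closure_of_subset_topspace definable_subset_tuples[OF X] by (rule order_trans)
  qed (auto simp: closure_eq)
qed

end

section \<open>Definable compactness\<close>

definition downward_directed :: "'a list set \<Rightarrow> 'a list set \<Rightarrow> bool" where
  "downward_directed U F \<longleftrightarrow> (\<forall>u\<in>U. \<forall>v\<in>U. \<exists>w\<in>U. fiber F w \<subseteq> fiber F u \<inter> fiber F v)"

lemma downward_directed_fiber_map:
  assumes "downward_directed U F" "mono \<phi>" "\<And>u. u \<in> U \<Longrightarrow> fiber G u = \<phi> (fiber F u)"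
  shows "downward_directed U G"
  unfolding downward_directed_def
proof (intro ballI)
  fix u v assume "u \<in> U" "v \<in> U"
  then obtain w where "w \<in> U" "fiber F w \<subseteq> fiber F u" "fiber F w \<subseteq> fiber F v"
    using assms(1) unfolding downward_directed_def by blast
  then show "\<exists>w\<in>U. fiber G w \<subseteq> fiber G u \<inter> fiber G v"
    using assms(2,3) \<open>u \<in> U\<close> \<open>v \<in> U\<close> by (metis le_inf_iff monoD)
qed

lemma definably_compactD:
  assumes "definably_compact S n T C" "definable_family S k n U F" "U \<noteq> {}"
    and "\<And>u. u \<in> U \<Longrightarrow> fiber F u \<noteq> {}"
    and "\<And>u. u \<in> U \<Longrightarrow> closedin (subtopology T C) (fiber F u)"
    and "downward_directed U F"
  shows "\<exists>x. \<forall>u\<in>U. x \<in> fiber F u"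
proof -
  have "(\<Inter>u\<in>U. fiber F u) \<noteq> {}"
    using assms unfolding definably_compact_def downward_directed_def by simp
  then show ?thesis by blast
qed

lemma definably_compactI:
  assumes "C \<in> S n" "C \<subseteq> topspace T"
    and "\<And>k U F. definable_family S k n U F \<Longrightarrow> U \<noteq> {} \<Longrightarrow> (\<And>u. u \<in> U \<Longrightarrow> fiber F u \<noteq> {}) \<Longrightarrow>
      (\<And>u. u \<in> U \<Longrightarrow> closedin (subtopology T C) (fiber F u)) \<Longrightarrow> downward_directed U F \<Longrightarrow>
      \<exists>x. \<forall>u\<in>U. x \<in> fiber F u"
  shows "definably_compact S n T C"
  unfolding definably_compact_def
proof (intro conjI allI impI)
  fix k U F
  assume "definable_family S k n U F \<and> U \<noteq> {} \<and>
    (\<forall>u\<in>U. fiber F u \<noteq> {} \<and> closedin (subtopology T C) (fiber F u)) \<and>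
    (\<forall>u\<in>U. \<forall>v\<in>U. \<exists>w\<in>U. fiber F w \<subseteq> fiber F u \<inter> fiber F v)"
  then have "\<exists>x. \<forall>u\<in>U. x \<in> fiber F u"
    using assms(3)[of k U F] unfolding downward_directed_def by blast
  then show "(\<Inter>u\<in>U. fiber F u) \<noteq> {}" by blast
qed (use assms in auto)

context definable_structure
begin

lemma definably_compact_meets_Inter:
  assumes K: "definably_compact S n T K" "K \<subseteq> D"
    and family: "definable_family S k n U F" "U \<noteq> {}"
    and closed: "\<And>u. u \<in> U \<Longrightarrow> closedin (subtopology T D) (fiber F u)"
    and meets: "\<And>u. u \<in> U \<Longrightarrow> fiber F u \<inter> K \<noteq> {}"
    and directed: "downward_directed U F"
  shows "\<exists>x\<in>K. \<forall>u\<in>U. x \<in> fiber F u"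
proof -
  have U: "U \<in> S k" and F: "F \<in> S (k + n)" and "K \<in> S n"
    using family K(1) by (auto simp: definable_family_def definably_compact_def)
  obtain G where G: "G \<in> S (k + n)" "\<And>u. length u = k \<Longrightarrow> fiber G u = fiber F u \<inter> K"
    using Int_family_definable[OF F \<open>K \<in> S n\<close>] by blast
  have G_fiber: "fiber G u = fiber F u \<inter> K" if "u \<in> U" for u
    using G(2) definable_length[OF U that] .
  have "\<exists>x. \<forall>u\<in>U. x \<in> fiber G u"
  proof (rule definably_compactD[OF K(1)])
    show "definable_family S k n U G"
      using U G(1) by (simp add: definable_family_def)
    show "U \<noteq> {}" by fact
    show "fiber G u \<noteq> {}" if "u \<in> U" for u
      using meets that G_fiber by simp
    show "closedin (subtopology T K) (fiber G u)" if "u \<in> U" for u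
    proof -
      have "closedin (subtopology T D) (D \<inter> fiber F u)"
        using closed[OF that] closedin_imp_subset[OF closed[OF that]] by (simp add: Int_absorb1)
      then have "closedin (subtopology T K) (K \<inter> fiber F u)"
        using K(2) by (rule closedin_subtopology_Int_subset)
      then show ?thesis using G_fiber[OF that] by (simp add: Int_commute)
    qed
    show "downward_directed U G"
      using directed by (rule downward_directed_fiber_map) (auto simp: mono_def G_fiber)
  qed
  then show ?thesis
    using family(2) G_fiber by (metis IntE all_not_in_conv)
qed

lemma definably_compact_common_image_point:
  assumes singletons: "\<And>a. {[a]} \<in> S 1"
    and TX: "definable_top_space S n TX" and f: "definable_map S n m (topspace TX) f"
    and closed_map: "\<And>K. K \<in> S n \<Longrightarrow> closedin TX K \<Longrightarrow> closedin TY (f ` K)"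
    and C: "definably_compact S m TY C"
    and family: "definable_family S k n U F" "U \<noteq> {}"
    and nonempty: "\<And>u. u \<in> U \<Longrightarrow> fiber F u \<noteq> {}"
    and closed: "\<And>u. u \<in> U \<Longrightarrow> closedin (subtopology TX {x \<in> topspace TX. f x \<in> C}) (fiber F u)"
    and directed: "downward_directed U F"
  shows "\<exists>y\<in>C. \<forall>u\<in>U. y \<in> f ` fiber F u"
proof -
  have X: "topspace TX \<in> S n" and U: "U \<in> S k" and F: "F \<in> S (k + n)"
    using TX family by (auto simp: definable_top_space_def definable_family_def)
  have F_sub: "fiber F u \<subseteq> {x \<in> topspace TX. f x \<in> C}" if "u \<in> U" for u
    using closed[OF that] by (rule closedin_imp_subset)
  obtain G where G: "G \<in> S (k + m)" "\<And>u. length u = k \<Longrightarrow> fiber G u = f ` (fiber F u \<inter> topspace TX)"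
    using image_family_definable[OF X f F] by blast
  have G_fiber: "fiber G u = f ` fiber F u" if "u \<in> U" for u
    using G(2)[OF definable_length[OF U that]] F_sub[OF that] by (simp add: Int_absorb2 subset_iff)
  have "\<exists>y. \<forall>u\<in>U. y \<in> fiber G u"
  proof (rule definably_compactD[OF C])
    show "definable_family S k m U G"
      using U G(1) by (simp add: definable_family_def)
    show "U \<noteq> {}" by fact
    show "fiber G u \<noteq> {}" if "u \<in> U" for u
      using nonempty that G_fiber by simp
    show "closedin (subtopology TY C) (fiber G u)" if "u \<in> U" for u
    proof -
      have "TX closure_of fiber F u \<in> S n"
        using TX fiber_definable[OF singletons F definable_length[OF U that]] by (rule closure_of_definable)
      then have "closedin TY (f ` (TX closure_of fiber F u))"
        using closed_map closedin_closure_of by blast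
      then show ?thesis
        unfolding G_fiber[OF that] using closed[OF that] by (intro closedin_subtopology_image_preimage)
    qed
    show "downward_directed U G"
      using directed by (rule downward_directed_fiber_map) (auto simp: mono_def G_fiber)
  qed
  then obtain y where y: "\<And>u. u \<in> U \<Longrightarrow> y \<in> fiber G u" by blast
  obtain u where "u \<in> U" using family(2) by blast
  then have "y \<in> f ` fiber F u"
    using y G_fiber by blast
  then have "y \<in> C"
    using F_sub[OF \<open>u \<in> U\<close>] by blast
  then show ?thesis
    using y G_fiber by blast
qed

end

theorem lemma4p11:
  fixes S :: "nat \<Rightarrow> ('a::{group_add,dense_linorder,no_top,no_bot}) list set set"
    and TX TY :: "'a list topology" and f :: "'a list \<Rightarrow> 'a list" and n m :: nat
  assumes ord_right: "\<And>a b c::'a. a < b \<Longrightarrow> a + c < b + c"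
    and ord_left: "\<And>a b c::'a. a < b \<Longrightarrow> c + a < c + b"
    and "is_structure S" and "expands_ordered_group S"
    and "locally_o_minimal S" and "definably_complete S"
    and "definable_top_space S n TX" and "definable_top_space S m TY"
    and "definable_map S n m (topspace TX) f" and "continuous_map TX TY f"
    and closed: "\<forall>C. C \<in> S n \<and> closedin TX C \<longrightarrow> closedin TY (f ` C)"
    and fibres: "\<forall>y\<in>topspace TY. definably_compact S n TX {x \<in> topspace TX. f x = y}"
  shows "\<forall>C. definably_compact S m TY C \<longrightarrow> definably_compact S n TX {x \<in> topspace TX. f x \<in> C}"
proof (intro allI impI)
  interpret definable_structure S
    by (rule definable_structure.intro) fact
  note TX = \<open>definable_top_space S n TX\<close> and f = \<open>definable_map S n m (topspace TX) f\<close>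
  fix C assume C: "definably_compact S m TY C"
  have singletons: "\<And>a. {[a]} \<in> S 1"
    using \<open>expands_ordered_group S\<close> by (simp add: expands_ordered_group_def)
  have X: "topspace TX \<in> S n"
    using TX by (simp add: definable_top_space_def)
  show "definably_compact S n TX {x \<in> topspace TX. f x \<in> C}"
  proof (rule definably_compactI)
    show "{x \<in> topspace TX. f x \<in> C} \<in> S n"
      using C by (intro preimage_definable[OF X f]) (simp add: definably_compact_def)
    fix k U F
    assume family: "definable_family S k n U F" "U \<noteq> {}"
      and nonempty: "\<And>u. u \<in> U \<Longrightarrow> fiber F u \<noteq> {}"
      and closed_F: "\<And>u. u \<in> U \<Longrightarrow> closedin (subtopology TX {x \<in> topspace TX. f x \<in> C}) (fiber F u)"
      and directed: "downward_directed U F"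
    have "\<exists>y\<in>C. \<forall>u\<in>U. y \<in> f ` fiber F u"
      using closed by (intro definably_compact_common_image_point[OF singletons TX f _ C family nonempty closed_F directed]) blast
    then obtain y where "y \<in> C" and y: "\<And>u. u \<in> U \<Longrightarrow> y \<in> f ` fiber F u"
      by blast
    then have fibre: "definably_compact S n TX {x \<in> topspace TX. f x = y}"
      using fibres C unfolding definably_compact_def[of S m TY C] by blast
    have meets: "fiber F u \<inter> {x \<in> topspace TX. f x = y} \<noteq> {}" if "u \<in> U" for u
      using y[OF that] closedin_imp_subset[OF closed_F[OF that]] by auto
    have "\<exists>x\<in>{x \<in> topspace TX. f x = y}. \<forall>u\<in>U. x \<in> fiber F u"
      using \<open>y \<in> C\<close> by (intro definably_compact_meets_Inter[OF fibre _ family closed_F meets directed]) auto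
    then show "\<exists>x. \<forall>u\<in>U. x \<in> fiber F u" by blast
  qed auto
qed

end
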